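(* Let $U\subset\mathbb{C}$ be a connected, simply connected open set and let $f:U\to\mathbb{R}^3_1$ be a minimal spacelike isothermal parametric surface with normal Gauss map $\tau:U\to\mathbb{H}^2$. Let $M=(U,\mathcal{A})$ be the Riemann surface determined by the conformal (isothermal) atlas $\mathcal{A}$ of the surface. If the set of planar points $\{w\in U: K_f(w)=0\}$ is empty, then $M$ is conformally equivalent to the unit disk $D=\{z\in\mathbb{C}: z\bar z<1\}$.
   Context: $\mathbb{R}^3_1$ is $\mathbb{R}^3$ with Lorentz product $-x^0y^0+x^1y^1+x^2y^2$; $\mathbb{H}^2$ is the upper sheet of the hyperboloid $\langle x,x\rangle=-1$. $K_f$ is the Gauss curvature of the induced metric. Standing assumption of the paper: $M$ is connected and simply connected and (since there are no compact spacelike surfaces) $M$ is conformally either the unit disk or the complex plane $\mathbb{C}$. *)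

theory Defs
  imports "HOL-Analysis.Analysis"
begin

text \<open>Lorentz product on R^3_1 (coordinates x0,x1,x2 are the components 1,2,3).\<close>
definition lor :: "real^3 \<Rightarrow> real^3 \<Rightarrow> real" where
  "lor x y = - (x$1 * y$1) + x$2 * y$2 + x$3 * y$3"

definition H2 :: "(real^3) set" where
  "H2 = {x. lor x x = -1 \<and> x$1 > 0}"

definition pdx :: "(complex \<Rightarrow> 'a::real_normed_vector) \<Rightarrow> complex \<Rightarrow> 'a" where
  "pdx g z = vector_derivative (\<lambda>t::real. g (z + of_real t)) (at 0)"

definition pdy :: "(complex \<Rightarrow> 'a::real_normed_vector) \<Rightarrow> complex \<Rightarrow> 'a" where
  "pdy g z = vector_derivative (\<lambda>t::real. g (z + \<i> * of_real t)) (at 0)"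

fun Ck_on :: "nat \<Rightarrow> complex set \<Rightarrow> (complex \<Rightarrow> 'a::real_normed_vector) \<Rightarrow> bool" where
  "Ck_on 0 U g = continuous_on U g"
| "Ck_on (Suc k) U g =
     (continuous_on U g \<and>
      (\<forall>z\<in>U. (\<lambda>t::real. g (z + of_real t)) differentiable (at 0)
             \<and> (\<lambda>t::real. g (z + \<i> * of_real t)) differentiable (at 0))
      \<and> Ck_on k U (pdx g) \<and> Ck_on k U (pdy g))"

definition smooth_surface_on :: "complex set \<Rightarrow> (complex \<Rightarrow> real^3) \<Rightarrow> bool" where
  "smooth_surface_on U f \<longleftrightarrow> (\<forall>k. Ck_on k U f)"

definition spacelike_isothermal :: "complex set \<Rightarrow> (complex \<Rightarrow> real^3) \<Rightarrow> bool" where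
  "spacelike_isothermal U f \<longleftrightarrow>
     (\<forall>z\<in>U. lor (pdx f z) (pdx f z) > 0
          \<and> lor (pdx f z) (pdx f z) = lor (pdy f z) (pdy f z)
          \<and> lor (pdx f z) (pdy f z) = 0)"

text \<open>Conformal factor: induced metric is lambda (dx^2 + dy^2).\<close>
definition conf_factor :: "(complex \<Rightarrow> real^3) \<Rightarrow> complex \<Rightarrow> real" where
  "conf_factor f z = lor (pdx f z) (pdx f z)"

definition normal_gauss_map :: "complex set \<Rightarrow> (complex \<Rightarrow> real^3) \<Rightarrow> (complex \<Rightarrow> real^3) \<Rightarrow> bool" where
  "normal_gauss_map U f \<tau> \<longleftrightarrow>
     (\<forall>z\<in>U. \<tau> z \<in> H2 \<and> lor (\<tau> z) (pdx f z) = 0 \<and> lor (\<tau> z) (pdy f z) = 0)"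

text \<open>Mean curvature in isothermal coordinates: H = (e + g) / (2 lambda),
  with e = <f_xx, tau>, g = <f_yy, tau>.\<close>
definition mean_curv :: "(complex \<Rightarrow> real^3) \<Rightarrow> (complex \<Rightarrow> real^3) \<Rightarrow> complex \<Rightarrow> real" where
  "mean_curv f \<tau> z = (lor (pdx (pdx f) z) (\<tau> z) + lor (pdy (pdy f) z) (\<tau> z)) / (2 * conf_factor f z)"

text \<open>Gauss curvature of the conformal metric lambda (dx^2+dy^2):
  K = - (Laplacian of log lambda) / (2 lambda).\<close>
definition gauss_curv :: "(complex \<Rightarrow> real^3) \<Rightarrow> complex \<Rightarrow> real" where
  "gauss_curv f z =
     - (pdx (pdx (\<lambda>w. ln (conf_factor f w))) z + pdy (pdy (\<lambda>w. ln (conf_factor f w))) z)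
       / (2 * conf_factor f z)"

text \<open>The Riemann surface (U, A) with A the isothermal atlas is U with its standard
  complex structure; conformal equivalence to the unit disk = biholomorphism.\<close>
definition conf_equiv_disk :: "complex set \<Rightarrow> bool" where
  "conf_equiv_disk U \<longleftrightarrow> (\<exists>g. g holomorphic_on U \<and> bij_betw g U (ball 0 1))"

end

theory Submission
  imports Defs "HOL-Complex_Analysis.Riemann_Mapping"
begin

text \<open>
  For \<open>U \<noteq> \<complex>\<close> the Riemann mapping theorem gives the biholomorphism onto the disk, so
  everything rests on excluding \<open>U = \<complex>\<close>. For a maximal isothermal surface, \<open>f\<^sub>x\<^sub>x + f\<^sub>y\<^sub>y\<close>
  is Lorentz-orthogonal to \<open>f\<^sub>x\<close> and \<open>f\<^sub>y\<close> (differentiate the isothermality relations) and to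
  the timelike normal \<open>\<tau>\<close> (\<open>H = 0\<close>), hence \<open>f\<close> is harmonic and the Weierstrass data
  \<open>\<phi>\<^sub>k = \<partial>\<^sub>x f\<^sub>k - \<i> \<partial>\<^sub>y f\<^sub>k\<close> are holomorphic. With \<open>A = \<phi>\<^sub>2 - \<i> \<phi>\<^sub>3\<close> and
  \<open>B = \<phi>\<^sub>2 + \<i> \<phi>\<^sub>3\<close> the conformal factor is \<open>\<lambda> = (\<bar>A\<bar> - \<bar>B\<bar>)\<^sup>2 / 4\<close>. On all of \<open>\<complex>\<close>,
  positivity of \<open>\<lambda>\<close> makes one of \<open>\<bar>A\<bar>, \<bar>B\<bar>\<close> dominate the other everywhere, so by Liouville
  their quotient is a constant of modulus \<open>< 1\<close> and \<open>\<lambda> = \<bar>q\<bar>\<^sup>2\<close> for an entire nowhere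
  vanishing \<open>q\<close>. Then \<open>ln \<lambda>\<close> is harmonic, and \<open>K = - \<Delta> ln \<lambda> / (2 \<lambda>)\<close> vanishes identically:
  every point is planar.
\<close>

section \<open>Directional derivatives and the mean value inequality\<close>

definition dir_deriv :: "complex \<Rightarrow> (complex \<Rightarrow> 'a::real_normed_vector) \<Rightarrow> complex \<Rightarrow> 'a" where
  "dir_deriv c g z = vector_derivative (\<lambda>t::real. g (z + c * of_real t)) (at 0)"

definition differentiable_along :: "complex \<Rightarrow> (complex \<Rightarrow> 'a::real_normed_vector) \<Rightarrow> bool" where
  "differentiable_along c g \<longleftrightarrow> (\<forall>w. (\<lambda>t::real. g (w + c * of_real t)) differentiable (at 0))"

lemma pdx_eq_dir_deriv: "pdx = dir_deriv 1"
  by (simp add: fun_eq_iff pdx_def dir_deriv_def)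

lemma pdy_eq_dir_deriv: "pdy = dir_deriv \<i>"
  by (simp add: fun_eq_iff pdy_def dir_deriv_def)

lemma has_vector_derivative_dir_deriv:
  assumes "differentiable_along c g"
  shows "((\<lambda>t. g (w + c * of_real t)) has_vector_derivative dir_deriv c g (w + c * of_real s)) (at s)"
proof -
  let ?w = "w + c * of_real s"
  have "((\<lambda>t. g (?w + c * of_real t)) has_vector_derivative dir_deriv c g ?w) (at 0)"
    using assms unfolding differentiable_along_def dir_deriv_def
    by (simp add: vector_derivative_works[symmetric])
  then have "(((\<lambda>t. g (?w + c * of_real t)) \<circ> (\<lambda>t. t - s)) has_vector_derivative
      (1::real) *\<^sub>R dir_deriv c g ?w) (at s)"
    by (intro vector_diff_chain_at) (auto intro!: derivative_eq_intros)
  moreover have "(\<lambda>t. g (?w + c * of_real t)) \<circ> (\<lambda>t. t - s) = (\<lambda>t. g (w + c * of_real t))"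
    by (auto simp: fun_eq_iff algebra_simps)
  ultimately show ?thesis
    by simp
qed

lemma dir_deriv_eqI:
  assumes "((\<lambda>t. g (z + c * of_real t)) has_vector_derivative g') (at 0)"
  shows "dir_deriv c g z = g'"
  using assms unfolding dir_deriv_def by (rule vector_derivative_at)

lemma has_vector_derivative_linearization_bound:
  fixes \<phi> :: "real \<Rightarrow> 'a::real_normed_vector"
  assumes deriv: "\<And>t. (\<phi> has_vector_derivative \<phi>' t) (at t)"
    and bound: "\<And>t. \<bar>t\<bar> \<le> \<bar>s\<bar> \<Longrightarrow> norm (\<phi>' t - B) \<le> e"
  shows "norm (\<phi> s - \<phi> 0 - s *\<^sub>R B) \<le> \<bar>s\<bar> * e"
proof -
  let ?S = "closed_segment 0 s"
  have "((\<lambda>t. \<phi> t - t *\<^sub>R B) has_derivative (\<lambda>h. h *\<^sub>R (\<phi>' t - B))) (at t within ?S)" for t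
    using has_derivative_at_withinI[OF deriv[of t, unfolded has_vector_derivative_def]]
    by (auto intro!: derivative_eq_intros simp: scaleR_diff_right)
  moreover have "onorm (\<lambda>h. h *\<^sub>R (\<phi>' t - B)) \<le> e" if "t \<in> ?S" for t
    using bound[of t] that
    by (auto simp: onorm_scaleR_left[OF bounded_linear_ident] onorm_id closed_segment_eq_real_ivl split: if_splits)
  ultimately have "norm ((\<phi> s - s *\<^sub>R B) - (\<phi> 0 - 0 *\<^sub>R B)) \<le> e * norm (s - 0)"
    by (intro differentiable_bound[of ?S]) auto
  then show ?thesis
    by (simp add: algebra_simps)
qed

lemma dir_deriv_linearization_bound:
  assumes "differentiable_along c g"
    and "\<And>t. \<bar>t\<bar> \<le> \<bar>s\<bar> \<Longrightarrow> norm (dir_deriv c g (w + c * of_real t) - B) \<le> e"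
  shows "norm (g (w + c * of_real s) - g w - s *\<^sub>R B) \<le> \<bar>s\<bar> * e"
  using has_vector_derivative_linearization_bound[OF has_vector_derivative_dir_deriv[OF assms(1)]] assms(2)
  by simp

lemma norm_Complex_le_mono: "\<bar>a\<bar> \<le> \<bar>a'\<bar> \<Longrightarrow> \<bar>b\<bar> \<le> \<bar>b'\<bar> \<Longrightarrow> cmod (Complex a b) \<le> cmod (Complex a' b')"
  by (simp add: cmod_def abs_le_square_iff add_mono)

lemma partials_linearization_bound:
  fixes g :: "complex \<Rightarrow> 'a::real_normed_vector"
  assumes diff: "differentiable_along 1 g" "differentiable_along \<i> g"
    and near: "\<And>w. dist w z < d \<Longrightarrow> norm (pdx g w - pdx g z) \<le> e \<and> norm (pdy g w - pdy g z) \<le> e"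
    and y: "norm (y - z) < d"
  shows "norm (g y - g z - (Re (y - z) *\<^sub>R pdx g z + Im (y - z) *\<^sub>R pdy g z)) \<le> 2 * e * norm (y - z)"
proof -
  define a b where "a = Re (y - z)" and "b = Im (y - z)"
  have y_eq: "y = (z + 1 * of_real a) + \<i> * of_real b"
    by (simp add: a_def b_def complex_eq_iff)
  have ab: "norm (y - z) = cmod (Complex a b)"
    by (simp only: a_def b_def complex_surj)
  have "e \<ge> 0"
    using near[of z] y norm_ge_zero[of "y - z"] by simp
  moreover have "\<bar>a\<bar> + \<bar>b\<bar> \<le> 2 * norm (y - z)"
    using abs_Re_le_cmod[of "y - z"] abs_Im_le_cmod[of "y - z"] by (simp add: a_def b_def)
  ultimately have sum_le: "(\<bar>a\<bar> + \<bar>b\<bar>) * e \<le> 2 * e * norm (y - z)"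
    using mult_right_mono by (metis mult.assoc mult.commute)
  have "norm (g (z + 1 * of_real a) - g z - a *\<^sub>R pdx g z) \<le> \<bar>a\<bar> * e"
  proof (rule dir_deriv_linearization_bound[OF diff(1), folded pdx_eq_dir_deriv])
    fix t :: real assume "\<bar>t\<bar> \<le> \<bar>a\<bar>"
    then have "cmod (Complex t 0) \<le> cmod (Complex a b)"
      by (intro norm_Complex_le_mono) auto
    then show "norm (pdx g (z + 1 * of_real t) - pdx g z) \<le> e"
      using near y ab by (simp add: dist_norm Complex_eq)
  qed
  moreover have "norm (g y - g (z + 1 * of_real a) - b *\<^sub>R pdy g z) \<le> \<bar>b\<bar> * e"
    unfolding y_eq
  proof (rule dir_deriv_linearization_bound[OF diff(2), folded pdy_eq_dir_deriv])
    fix t :: real assume "\<bar>t\<bar> \<le> \<bar>b\<bar>"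
    then have "cmod (Complex a t) \<le> cmod (Complex a b)"
      by (intro norm_Complex_le_mono) auto
    then show "norm (pdy g (z + 1 * of_real a + \<i> * of_real t) - pdy g z) \<le> e"
      using near y ab by (simp add: dist_norm Complex_eq)
  qed
  ultimately have "norm ((g y - g (z + 1 * of_real a) - b *\<^sub>R pdy g z)
      + (g (z + 1 * of_real a) - g z - a *\<^sub>R pdx g z)) \<le> 2 * e * norm (y - z)"
    using sum_le by (smt (verit) distrib_right norm_triangle_ineq)
  then show ?thesis
    by (simp add: a_def b_def algebra_simps)
qed

lemma has_derivative_of_continuous_partials:
  fixes g :: "complex \<Rightarrow> 'a::real_normed_vector"
  assumes diff: "differentiable_along 1 g" "differentiable_along \<i> g"
    and cont: "continuous_on UNIV (pdx g)" "continuous_on UNIV (pdy g)"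
  shows "(g has_derivative (\<lambda>h. Re h *\<^sub>R pdx g z + Im h *\<^sub>R pdy g z)) (at z)"
  unfolding has_derivative_at_alt
proof (intro conjI allI impI)
  show "bounded_linear (\<lambda>h. Re h *\<^sub>R pdx g z + Im h *\<^sub>R pdy g z)"
    by (intro bounded_linear_add bounded_linear_compose[OF bounded_linear_scaleR_left bounded_linear_Re]
        bounded_linear_compose[OF bounded_linear_scaleR_left bounded_linear_Im])
  fix e :: real
  assume "e > 0"
  have "isCont (pdx g) z" "isCont (pdy g) z" "e/2 > 0"
    using cont \<open>e > 0\<close> by (simp_all add: continuous_on_eq_continuous_at)
  then obtain d1 d2 where "d1 > 0" "\<And>w. dist w z < d1 \<Longrightarrow> dist (pdx g w) (pdx g z) < e/2"
    and "d2 > 0" "\<And>w. dist w z < d2 \<Longrightarrow> dist (pdy g w) (pdy g z) < e/2"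
    unfolding continuous_at_eps_delta by blast
  then obtain d where "d > 0"
    and near: "\<And>w. dist w z < d \<Longrightarrow> norm (pdx g w - pdx g z) \<le> e/2 \<and> norm (pdy g w - pdy g z) \<le> e/2"
    by (intro that[of "min d1 d2"]) (auto simp: dist_norm less_imp_le)
  show "\<exists>d>0. \<forall>y. norm (y - z) < d \<longrightarrow>
      norm (g y - g z - (Re (y - z) *\<^sub>R pdx g z + Im (y - z) *\<^sub>R pdy g z)) \<le> e * norm (y - z)"
    using \<open>d > 0\<close> partials_linearization_bound[OF diff near] by auto
qed

lemma second_difference_bound:
  assumes diff: "differentiable_along u g" "differentiable_along v (dir_deriv u g)"
    and near: "\<And>a b. \<bar>a\<bar> \<le> \<bar>s\<bar> \<Longrightarrow> \<bar>b\<bar> \<le> \<bar>s\<bar> \<Longrightarrow>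
      norm (dir_deriv v (dir_deriv u g) (z + u * of_real a + v * of_real b) - P) \<le> e"
  shows "norm (g (z + u * of_real s + v * of_real s) - g (z + u * of_real s) - g (z + v * of_real s) + g z
      - (s * s) *\<^sub>R P) \<le> s * s * e"
proof -
  define \<phi> where "\<phi> t = g (z + v * of_real s + u * of_real t) - g (z + u * of_real t)" for t
  have "(\<phi> has_vector_derivative
      dir_deriv u g (z + v * of_real s + u * of_real t) - dir_deriv u g (z + u * of_real t)) (at t)" for t
    unfolding \<phi>_def by (intro has_vector_derivative_diff has_vector_derivative_dir_deriv[OF diff(1)])
  moreover have "norm (dir_deriv u g (z + u * of_real t + v * of_real s) - dir_deriv u g (z + u * of_real t)
      - s *\<^sub>R P) \<le> \<bar>s\<bar> * e" if "\<bar>t\<bar> \<le> \<bar>s\<bar>" for t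
    using near that by (intro dir_deriv_linearization_bound[OF diff(2)]) auto
  ultimately have "norm (\<phi> s - \<phi> 0 - s *\<^sub>R (s *\<^sub>R P)) \<le> \<bar>s\<bar> * (\<bar>s\<bar> * e)"
    by (intro has_vector_derivative_linearization_bound) (auto simp: add_ac)
  then show ?thesis
    by (simp add: \<phi>_def algebra_simps abs_mult_self)
qed

lemma mixed_partials_dist_le:
  fixes g :: "complex \<Rightarrow> 'a::real_normed_vector"
  assumes diff: "differentiable_along 1 g" "differentiable_along \<i> g"
      "differentiable_along \<i> (pdx g)" "differentiable_along 1 (pdy g)"
    and "s > 0"
    and near: "\<And>w. dist w z < 3 * s \<Longrightarrow> norm (pdy (pdx g) w - P) \<le> e \<and> norm (pdx (pdy g) w - Q) \<le> e"
  shows "norm (P - Q) \<le> 2 * e"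
proof -
  have close: "dist (z + 1 * of_real a + \<i> * of_real b) z < 3 * s" if "\<bar>a\<bar> \<le> \<bar>s\<bar>" "\<bar>b\<bar> \<le> \<bar>s\<bar>" for a b
  proof -
    have "dist (z + 1 * of_real a + \<i> * of_real b) z = cmod (Complex a b)"
      by (simp add: dist_norm Complex_eq)
    also have "\<dots> \<le> \<bar>a\<bar> + \<bar>b\<bar>"
      using cmod_le[of "Complex a b"] by simp
    finally show ?thesis
      using that \<open>s > 0\<close> by simp
  qed
  define \<Delta> where "\<Delta> = g (z + 1 * of_real s + \<i> * of_real s) - g (z + 1 * of_real s) - g (z + \<i> * of_real s) + g z"
  have "norm (\<Delta> - (s * s) *\<^sub>R P) \<le> s * s * e"
    unfolding \<Delta>_def
    by (rule second_difference_bound[OF diff(1), of \<i>, folded pdx_eq_dir_deriv pdy_eq_dir_deriv])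
      (use diff close near in auto)
  moreover have "norm (\<Delta> - (s * s) *\<^sub>R Q) \<le> s * s * e"
  proof -
    have "norm (g (z + \<i> * of_real s + 1 * of_real s) - g (z + \<i> * of_real s) - g (z + 1 * of_real s) + g z
        - (s * s) *\<^sub>R Q) \<le> s * s * e"
      by (rule second_difference_bound[OF diff(2), of 1, folded pdx_eq_dir_deriv pdy_eq_dir_deriv])
        (use diff close near in \<open>auto simp: add_ac\<close>)
    then show ?thesis
      by (simp add: \<Delta>_def algebra_simps)
  qed
  ultimately have "(s * s) * norm (P - Q) \<le> (s * s) * (2 * e)"
    using norm_triangle_ineq4[of "\<Delta> - (s * s) *\<^sub>R Q" "\<Delta> - (s * s) *\<^sub>R P"]
    by (simp add: algebra_simps flip: scaleR_diff_right)
  then show ?thesis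
    using \<open>s > 0\<close> by simp
qed

lemma pdy_pdx_eq_pdx_pdy:
  fixes g :: "complex \<Rightarrow> 'a::real_normed_vector"
  assumes diff: "differentiable_along 1 g" "differentiable_along \<i> g"
      "differentiable_along \<i> (pdx g)" "differentiable_along 1 (pdy g)"
    and cont: "continuous_on UNIV (pdy (pdx g))" "continuous_on UNIV (pdx (pdy g))"
  shows "pdy (pdx g) z = pdx (pdy g) z"
proof (rule ccontr)
  define P Q where "P = pdy (pdx g) z" and "Q = pdx (pdy g) z"
  assume "P \<noteq> Q"
  define e where "e = norm (P - Q) / 4"
  have "e > 0"
    using \<open>P \<noteq> Q\<close> by (simp add: e_def)
  have "isCont (pdy (pdx g)) z" "isCont (pdx (pdy g)) z"
    using cont by (simp_all add: continuous_on_eq_continuous_at)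
  then obtain d1 d2 where "d1 > 0" "\<And>w. dist w z < d1 \<Longrightarrow> dist (pdy (pdx g) w) P < e"
    and "d2 > 0" "\<And>w. dist w z < d2 \<Longrightarrow> dist (pdx (pdy g) w) Q < e"
    using \<open>e > 0\<close> unfolding continuous_at_eps_delta P_def Q_def by blast
  then have "norm (P - Q) \<le> 2 * e"
    by (intro mixed_partials_dist_le[OF diff, of "min d1 d2 / 3" z]) (auto simp: dist_norm less_imp_le)
  then show False
    using \<open>e > 0\<close> by (simp add: e_def)
qed

section \<open>The Lorentz product\<close>

lemma lor_commute: "lor a b = lor b a"
  by (simp add: lor_def mult.commute)

lemma bounded_bilinear_lor: "bounded_bilinear lor"
proof -
  have "linear (\<lambda>y. lor x y)" "linear (\<lambda>x. lor x y)" for x y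
    by (auto intro!: linearI simp: lor_def algebra_simps)
  then show ?thesis
    by (simp add: bilinear_def flip: bilinear_conv_bounded_bilinear)
qed

interpretation lor: bounded_bilinear lor
  by (rule bounded_bilinear_lor)

lemma lor_orthogonal_to_frame_eq_0:
  fixes a b c v :: "real^3"
  assumes non_null: "lor a a \<noteq> 0" "lor b b \<noteq> 0" "lor c c \<noteq> 0"
    and frame: "lor a b = 0" "lor a c = 0" "lor b c = 0"
    and orth: "lor a v = 0" "lor b v = 0" "lor c v = 0"
  shows "v = 0"
proof -
  define J :: "real^3 \<Rightarrow> real^3" where "J x = vector [- x$1, x$2, x$3]" for x
  define N :: "real^3^3" where "N = vector [J a, J b, J c]"
  define M :: "real^3^3" where "M = vector [a, b, c]"
  have lor_J: "lor x y = J x $ 1 * y $ 1 + J x $ 2 * y $ 2 + J x $ 3 * y $ 3" for x y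
    by (simp add: J_def lor_def)
  have rows: "N$1 = J a" "N$2 = J b" "N$3 = J c" "M$1 = a" "M$2 = b" "M$3 = c"
    by (simp_all add: N_def M_def)
  have gram: "(N ** transpose M) $ i $ j = N$i$1 * M$j$1 + N$i$2 * M$j$2 + N$i$3 * M$j$3" for i j
    by (simp add: matrix_matrix_mult_def transpose_def sum_3)
  \<comment> \<open>\<open>N ** transpose M\<close> is the Lorentz Gram matrix of \<open>a, b, c\<close>, which is diagonal\<close>
  have "det (N ** transpose M) = lor a a * lor b b * lor c c"
    using frame lor_commute[of b a] lor_commute[of c a] lor_commute[of c b]
    unfolding det_3 gram rows lor_J[symmetric] by simp
  then have "det N \<noteq> 0"
    using non_null by (auto simp: det_mul)
  then obtain N' where "N' ** N = mat 1"
    using invertible_det_nz invertible_left_inverse by blast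
  moreover have "N *v v = 0"
  proof -
    have "(N *v v) $ i = N$i$1 * v$1 + N$i$2 * v$2 + N$i$3 * v$3" for i
      by (simp add: matrix_vector_mult_def sum_3)
    then show ?thesis
      using orth unfolding vec_eq_iff forall_3 lor_J by (simp add: rows)
  qed
  ultimately show ?thesis
    using matrix_left_invertible_ker by blast
qed

lemma dir_deriv_lor:
  assumes "differentiable_along c A" "differentiable_along c B"
  shows "dir_deriv c (\<lambda>w. lor (A w) (B w)) z = lor (A z) (dir_deriv c B z) + lor (dir_deriv c A z) (B z)"
  using lor.has_vector_derivative[OF has_vector_derivative_dir_deriv[OF assms(1), of z 0]
      has_vector_derivative_dir_deriv[OF assms(2), of z 0]]
  by (intro dir_deriv_eqI) simp

lemma dir_deriv_const: "dir_deriv c (\<lambda>w. k) z = 0"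
  by (intro dir_deriv_eqI) simp

section \<open>Harmonicity of maximal surfaces and the Weierstrass data\<close>

lemma smooth_surface_on_UNIV_C2:
  assumes "smooth_surface_on UNIV f"
  shows "differentiable_along 1 f" "differentiable_along \<i> f"
    "differentiable_along 1 (pdx f)" "differentiable_along \<i> (pdx f)"
    "differentiable_along 1 (pdy f)" "differentiable_along \<i> (pdy f)"
    "continuous_on UNIV (pdx (pdx f))" "continuous_on UNIV (pdy (pdx f))"
    "continuous_on UNIV (pdx (pdy f))" "continuous_on UNIV (pdy (pdy f))"
  using assms[unfolded smooth_surface_on_def, rule_format, of 2]
  by (simp_all add: numeral_2_eq_2 differentiable_along_def)

lemma maximal_isothermal_laplacian_eq_0:
  assumes smooth: "smooth_surface_on UNIV f" and iso: "spacelike_isothermal UNIV f"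
    and gauss: "normal_gauss_map UNIV f \<tau>" and maximal: "\<forall>z. mean_curv f \<tau> z = 0"
  shows "pdx (pdx f) z + pdy (pdy f) z = 0"
proof -
  note C2 = smooth_surface_on_UNIV_C2[OF smooth]
  let ?X = "pdx f z" and ?Y = "pdy f z"
  let ?Xx = "pdx (pdx f) z" and ?Xy = "pdy (pdx f) z" and ?Yx = "pdx (pdy f) z" and ?Yy = "pdy (pdy f) z"
  have Xy_Yx: "?Xy = ?Yx"
    using C2 by (intro pdy_pdx_eq_pdx_pdy)
  have iso_z: "lor ?X ?X > 0" "lor ?X ?X = lor ?Y ?Y" "lor ?X ?Y = 0"
    using iso unfolding spacelike_isothermal_def by blast+
  have "(\<lambda>w. lor (pdx f w) (pdx f w)) = (\<lambda>w. lor (pdy f w) (pdy f w))"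
    and "(\<lambda>w. lor (pdx f w) (pdy f w)) = (\<lambda>w. 0)"
    using iso unfolding spacelike_isothermal_def by auto
  then have "dir_deriv c (\<lambda>w. lor (pdx f w) (pdx f w)) z = dir_deriv c (\<lambda>w. lor (pdy f w) (pdy f w)) z"
    and "dir_deriv c (\<lambda>w. lor (pdx f w) (pdy f w)) z = 0" for c
    by (simp_all add: dir_deriv_const)
  from this[of 1] this[of \<i>]
  have "lor ?X ?Xx = lor ?Y ?Yx" "lor ?X ?Xy = lor ?Y ?Yy" "lor ?X ?Yx + lor ?Xx ?Y = 0" "lor ?X ?Yy + lor ?Xy ?Y = 0"
    using C2 by (simp_all add: pdx_eq_dir_deriv pdy_eq_dir_deriv dir_deriv_lor lor_commute)
  then have "lor ?X (?Xx + ?Yy) = 0" "lor ?Y (?Xx + ?Yy) = 0"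
    using Xy_Yx by (simp_all add: lor.add_right lor_commute)
  moreover have "lor (\<tau> z) (?Xx + ?Yy) = 0"
    using maximal[rule_format, of z] iso_z(1) by (simp add: mean_curv_def conf_factor_def lor.add_right lor_commute)
  moreover have "lor (\<tau> z) (\<tau> z) = -1" "lor ?X (\<tau> z) = 0" "lor ?Y (\<tau> z) = 0"
    using gauss unfolding normal_gauss_map_def H2_def by (auto simp: lor_commute)
  ultimately show ?thesis
    using iso_z by (intro lor_orthogonal_to_frame_eq_0[of ?X ?Y "\<tau> z"]) auto
qed

lemma has_field_derivative_if_Cauchy_Riemann:
  fixes g :: "complex \<Rightarrow> complex"
  assumes "differentiable_along 1 g" "differentiable_along \<i> g"
    and "continuous_on UNIV (pdx g)" "continuous_on UNIV (pdy g)"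
    and Cauchy_Riemann: "pdy g z = \<i> * pdx g z"
  shows "(g has_field_derivative pdx g z) (at z)"
proof -
  have "(\<lambda>h. Re h *\<^sub>R pdx g z + Im h *\<^sub>R pdy g z) = (\<lambda>h. pdx g z * h)"
    by (auto simp: Cauchy_Riemann scaleR_conv_of_real algebra_simps complex_eq_iff)
  then show ?thesis
    using has_derivative_of_continuous_partials[OF assms(1-4), of z]
    by (simp add: has_field_derivative_def)
qed

definition weierstrass_data :: "(complex \<Rightarrow> real^3) \<Rightarrow> 3 \<Rightarrow> complex \<Rightarrow> complex" where
  "weierstrass_data f k z = of_real (pdx f z $ k) - \<i> * of_real (pdy f z $ k)"

lemma has_vector_derivative_weierstrass_component:
  fixes k :: 3
  assumes "(P has_vector_derivative P') F" "(Q has_vector_derivative Q') F"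
  shows "((\<lambda>t. of_real (P t $ k) - \<i> * of_real (Q t $ k)) has_vector_derivative
      of_real (P' $ k) - \<i> * of_real (Q' $ k)) F"
proof -
  have "bounded_linear (\<lambda>x::real^3. complex_of_real (x $ k))"
    by (rule bounded_linear_compose[OF bounded_linear_of_real bounded_linear_vec_nth])
  then show ?thesis
    by (intro has_vector_derivative_diff bounded_linear.has_vector_derivative[OF _ assms(1)]
        bounded_linear.has_vector_derivative[OF bounded_linear_compose[OF bounded_linear_mult_right] assms(2)])
qed

lemma dir_deriv_weierstrass_data:
  assumes "differentiable_along c (pdx f)" "differentiable_along c (pdy f)"
  shows "differentiable_along c (weierstrass_data f k)"
    and "dir_deriv c (weierstrass_data f k) z =
      of_real (dir_deriv c (pdx f) z $ k) - \<i> * of_real (dir_deriv c (pdy f) z $ k)"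
proof -
  have "((\<lambda>t. weierstrass_data f k (w + c * of_real t)) has_vector_derivative
      of_real (dir_deriv c (pdx f) w $ k) - \<i> * of_real (dir_deriv c (pdy f) w $ k)) (at 0)" for w
    unfolding weierstrass_data_def
    using has_vector_derivative_weierstrass_component[OF
        has_vector_derivative_dir_deriv[OF assms(1), of w 0] has_vector_derivative_dir_deriv[OF assms(2), of w 0]]
    by simp
  then show "differentiable_along c (weierstrass_data f k)"
    and "dir_deriv c (weierstrass_data f k) z =
      of_real (dir_deriv c (pdx f) z $ k) - \<i> * of_real (dir_deriv c (pdy f) z $ k)"
    by (auto simp: differentiable_along_def intro: differentiableI_vector dir_deriv_eqI)
qed

lemma weierstrass_data_holomorphic:
  assumes smooth: "smooth_surface_on UNIV f" and iso: "spacelike_isothermal UNIV f"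
    and gauss: "normal_gauss_map UNIV f \<tau>" and maximal: "\<forall>z. mean_curv f \<tau> z = 0"
  shows "weierstrass_data f k holomorphic_on UNIV"
proof -
  note C2 = smooth_surface_on_UNIV_C2[OF smooth]
  note partials = dir_deriv_weierstrass_data[of 1 f, folded pdx_eq_dir_deriv]
    dir_deriv_weierstrass_data[of \<i> f, folded pdy_eq_dir_deriv]
  have "(weierstrass_data f k has_field_derivative pdx (weierstrass_data f k) z) (at z)" for z
  proof (rule has_field_derivative_if_Cauchy_Riemann)
    show "differentiable_along 1 (weierstrass_data f k)" "differentiable_along \<i> (weierstrass_data f k)"
      using C2 partials by auto
    show "continuous_on UNIV (pdx (weierstrass_data f k))" "continuous_on UNIV (pdy (weierstrass_data f k))"
      using C2 partials by (auto simp: fun_eq_iff intro!: continuous_intros)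
    have "pdy (pdy f) z $ k = - (pdx (pdx f) z $ k)"
      using maximal_isothermal_laplacian_eq_0[OF assms, of z]
      by (simp add: vec_eq_iff eq_neg_iff_add_eq_0 add.commute)
    then show "pdy (weierstrass_data f k) z = \<i> * pdx (weierstrass_data f k) z"
      using C2 partials(2,4)[of k z] pdy_pdx_eq_pdx_pdy[OF C2(1,2,4,5,8,9), of z]
      by (simp add: complex_eq_iff)
  qed
  then show ?thesis
    by (auto simp: holomorphic_on_open)
qed

lemma isothermal_lor_eq_moduli_difference:
  fixes X Y :: "real^3"
  assumes "lor X X = lor Y Y" "lor X Y = 0"
  defines "\<phi> k \<equiv> of_real (X$k) - \<i> * of_real (Y$k)"
  shows "4 * lor X X = (cmod (\<phi> 2 - \<i> * \<phi> 3) - cmod (\<phi> 2 + \<i> * \<phi> 3))\<^sup>2"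
proof -
  define a b where "a = \<phi> 2 - \<i> * \<phi> 3" and "b = \<phi> 2 + \<i> * \<phi> 3"
  have re_im: "Re a = X$2 - Y$3" "Im a = - Y$2 - X$3" "Re b = X$2 + Y$3" "Im b = X$3 - Y$2"
    by (simp_all add: a_def b_def \<phi>_def)
  \<comment> \<open>isothermality says exactly that \<open>\<phi>\<close> is a null vector: \<open>\<phi> 1\<^sup>2 = \<phi> 2\<^sup>2 + \<phi> 3\<^sup>2\<close>\<close>
  have "a * b = (\<phi> 1)\<^sup>2"
    using assms(1,2) by (simp add: a_def b_def \<phi>_def lor_def complex_eq_iff power2_eq_square algebra_simps)
  then have "cmod a * cmod b = (cmod (\<phi> 1))\<^sup>2"
    by (simp add: norm_power flip: norm_mult)
  also have "\<dots> = (X$1)\<^sup>2 + (Y$1)\<^sup>2"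
    by (simp add: \<phi>_def cmod_power2)
  finally have "cmod a * cmod b = (X$1)\<^sup>2 + (Y$1)\<^sup>2" .
  moreover have "(cmod a)\<^sup>2 + (cmod b)\<^sup>2 = 2 * ((X$2)\<^sup>2 + (Y$2)\<^sup>2 + (X$3)\<^sup>2 + (Y$3)\<^sup>2)"
    unfolding cmod_power2 re_im by (simp add: power2_eq_square algebra_simps)
  ultimately have "(cmod a - cmod b)\<^sup>2 = 2 * (lor X X + lor Y Y)"
    by (simp add: power2_diff lor_def power2_eq_square algebra_simps)
  then show ?thesis
    using assms(1) by (simp add: a_def b_def)
qed

lemma conf_factor_weierstrass_data:
  assumes "spacelike_isothermal U f" "w \<in> U"
  shows "4 * conf_factor f w = (cmod (weierstrass_data f 2 w - \<i> * weierstrass_data f 3 w)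
    - cmod (weierstrass_data f 2 w + \<i> * weierstrass_data f 3 w))\<^sup>2"
  unfolding conf_factor_def weierstrass_data_def
  using assms unfolding spacelike_isothermal_def
  by (intro isothermal_lor_eq_moduli_difference) auto

section \<open>Entire maximal surfaces are flat\<close>

lemma continuous_on_nonzero_constant_sign:
  fixes d :: "'a::topological_space \<Rightarrow> real"
  assumes "connected S" "continuous_on S d" "\<forall>z\<in>S. d z \<noteq> 0"
  shows "(\<forall>z\<in>S. d z > 0) \<or> (\<forall>z\<in>S. d z < 0)"
proof (rule ccontr)
  assume "\<not> ?thesis"
  then obtain z1 z2 where "z1 \<in> S" "z2 \<in> S" "d z1 < 0" "d z2 > 0"
    using assms(3) by (metis linorder_neqE_linordered_idom)
  moreover have "connected (d ` S)"
    using assms(2,1) by (rule connected_continuous_image)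
  ultimately have "0 \<in> d ` S"
    unfolding connected_iff_interval by (meson imageI less_imp_le)
  then show False
    using assms(3) by auto
qed

lemma entire_dominated_eq_const_mult:
  assumes "P holomorphic_on UNIV" "Q holomorphic_on UNIV" and dominated: "\<forall>z. cmod (Q z) < cmod (P z)"
  obtains c where "cmod c < 1" "\<And>z. Q z = c * P z"
proof -
  have nonzero: "P z \<noteq> 0" for z
    using dominated[rule_format, of z] by auto
  define R where "R z = Q z / P z" for z
  have "R holomorphic_on UNIV"
    unfolding R_def using assms nonzero by (intro holomorphic_intros) auto
  moreover have bound: "cmod (R z) < 1" for z
    using dominated[rule_format, of z] nonzero by (simp add: R_def norm_divide divide_less_eq)
  then have "bounded (range R)"
    unfolding bounded_iff by (metis less_imp_le rangeE)
  ultimately obtain c where "\<And>z. R z = c"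
    using Liouville_theorem unfolding constant_on_def by blast
  then show ?thesis
    using bound nonzero by (intro that[of c]) (auto simp: R_def field_simps)
qed

lemma entire_moduli_difference_eq_norm:
  assumes "A holomorphic_on UNIV" "B holomorphic_on UNIV" "\<forall>w. cmod (A w) \<noteq> cmod (B w)"
  obtains q where "q holomorphic_on UNIV" "\<And>w. q w \<noteq> 0" "\<And>w. \<bar>cmod (A w) - cmod (B w)\<bar> = cmod (q w)"
proof -
  have dominated: "\<exists>q. q holomorphic_on UNIV \<and> (\<forall>w. q w \<noteq> 0 \<and> cmod (P w) - cmod (Q w) = cmod (q w))"
    if PQ: "P holomorphic_on UNIV" "Q holomorphic_on UNIV" "\<forall>w. cmod (Q w) < cmod (P w)" for P Q
  proof -
    obtain c where c: "cmod c < 1" "\<And>w. Q w = c * P w"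
      using entire_dominated_eq_const_mult[OF PQ] by blast
    have "P w \<noteq> 0" for w
      using PQ(3) by (metis norm_ge_zero norm_zero not_less)
    moreover have "cmod (P w) - cmod (Q w) = cmod (of_real (1 - cmod c) * P w)" for w
      using c by (simp add: norm_mult left_diff_distrib del: of_real_diff)
    ultimately show ?thesis
      using c(1) PQ(1) by (intro exI[of _ "\<lambda>w. of_real (1 - cmod c) * P w"]) (auto intro!: holomorphic_intros)
  qed
  have "continuous_on UNIV (\<lambda>w. cmod (A w) - cmod (B w))"
    using assms(1,2) by (auto intro!: continuous_intros holomorphic_on_imp_continuous_on)
  then have "(\<forall>w. cmod (B w) < cmod (A w)) \<or> (\<forall>w. cmod (A w) < cmod (B w))"
    using continuous_on_nonzero_constant_sign[of UNIV] assms(3) by force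
  then show ?thesis
    using dominated[of A B] dominated[of B A] assms(1,2) that by (metis abs_minus_commute abs_of_pos diff_gt_0_iff_gt)
qed

lemma dir_deriv_Re_holomorphic:
  assumes "G holomorphic_on UNIV"
  shows "dir_deriv c (\<lambda>w. Re (G w)) = (\<lambda>w. Re (c * deriv G w))"
proof
  fix w
  have "((\<lambda>t. w + c * of_real t) has_vector_derivative c) (at 0)"
    by (auto intro!: derivative_eq_intros)
  moreover have "(G has_field_derivative deriv G w) (at (w + c * of_real 0))"
    using holomorphic_derivI[OF assms open_UNIV] by simp
  ultimately have "((\<lambda>t. G (w + c * of_real t)) has_vector_derivative c * deriv G w) (at 0)"
    using field_vector_diff_chain_at by (force simp: o_def)
  then show "dir_deriv c (\<lambda>w. Re (G w)) w = Re (c * deriv G w)"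
    by (intro dir_deriv_eqI bounded_linear.has_vector_derivative[OF bounded_linear_Re])
qed

lemma laplacian_Re_holomorphic_eq_0:
  assumes "G holomorphic_on UNIV"
  shows "pdx (pdx (\<lambda>w. Re (G w))) z + pdy (pdy (\<lambda>w. Re (G w))) z = 0"
proof -
  have G': "deriv G holomorphic_on UNIV" "(\<lambda>w. \<i> * deriv G w) holomorphic_on UNIV"
    using assms by (auto intro!: holomorphic_intros holomorphic_deriv)
  have "deriv (\<lambda>w. \<i> * deriv G w) z = \<i> * deriv (deriv G) z"
    using G'(1) by (intro deriv_cmult) (auto intro: holomorphic_on_imp_differentiable_at)
  then show ?thesis
    unfolding pdx_eq_dir_deriv pdy_eq_dir_deriv dir_deriv_Re_holomorphic[OF assms]
    using dir_deriv_Re_holomorphic[OF G'(1), of 1] dir_deriv_Re_holomorphic[OF G'(2), of \<i>]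
    by simp
qed

lemma gauss_curv_eq_0_if_conf_factor_eq_norm_square:
  assumes "q holomorphic_on UNIV" "\<And>w. q w \<noteq> 0" "\<And>w. conf_factor f w = (cmod (q w))\<^sup>2"
  shows "gauss_curv f z = 0"
proof -
  have "simply_connected (UNIV :: complex set)"
    by (rule convex_imp_simply_connected[OF convex_UNIV])
  then obtain h where "h holomorphic_on UNIV" and q_eq: "\<And>w. q w = exp (h w)"
    using assms(1,2) unfolding simply_connected_eq_holomorphic_log[OF open_UNIV] by blast
  moreover have "ln (conf_factor f w) = Re (2 * h w)" for w
    by (simp add: assms(3) q_eq ln_exp power2_eq_square flip: exp_add)
  ultimately show ?thesis
    unfolding gauss_curv_def
    using laplacian_Re_holomorphic_eq_0[of "\<lambda>w. 2 * h w" z] by (simp add: holomorphic_intros)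
qed

lemma entire_maximal_surface_flat:
  assumes smooth: "smooth_surface_on UNIV f" and iso: "spacelike_isothermal UNIV f"
    and gauss: "normal_gauss_map UNIV f \<tau>" and maximal: "\<forall>z. mean_curv f \<tau> z = 0"
  shows "gauss_curv f z = 0"
proof -
  define A B where "A w = weierstrass_data f 2 w - \<i> * weierstrass_data f 3 w"
    and "B w = weierstrass_data f 2 w + \<i> * weierstrass_data f 3 w" for w
  have holomorphic: "A holomorphic_on UNIV" "B holomorphic_on UNIV"
    unfolding A_def B_def using weierstrass_data_holomorphic[OF assms]
    by (auto intro!: holomorphic_intros)
  have conf: "4 * conf_factor f w = (cmod (A w) - cmod (B w))\<^sup>2" for w
    unfolding A_def B_def by (rule conf_factor_weierstrass_data[OF iso UNIV_I])
  have pos: "conf_factor f w > 0" for w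
    using iso unfolding spacelike_isothermal_def conf_factor_def by blast
  have "(cmod (A w) - cmod (B w))\<^sup>2 > 0" for w
    using conf[of w] pos[of w] by linarith
  then have "\<forall>w. cmod (A w) \<noteq> cmod (B w)"
    by (metis diff_self less_irrefl power_zero_numeral)
  then obtain q where "q holomorphic_on UNIV" "\<And>w. q w \<noteq> 0"
    and q: "\<And>w. \<bar>cmod (A w) - cmod (B w)\<bar> = cmod (q w)"
    using entire_moduli_difference_eq_norm[OF holomorphic] by blast
  moreover have "conf_factor f w = (cmod (q w / 2))\<^sup>2" for w
  proof -
    have "(cmod (A w) - cmod (B w))\<^sup>2 = (cmod (q w))\<^sup>2"
      by (metis q power2_abs)
    then show ?thesis
      using conf[of w] by (simp add: norm_divide power_divide)
  qed
  ultimately show ?thesis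
    by (intro gauss_curv_eq_0_if_conf_factor_eq_norm_square[of "\<lambda>w. q w / 2"]) (auto intro!: holomorphic_intros)
qed

theorem mainTheorem3:
  fixes U :: "complex set" and f \<tau> :: "complex \<Rightarrow> real^3"
  assumes "open U" and "connected U" and "U \<noteq> {}" and "simply_connected U"
    and "smooth_surface_on U f"
    and "spacelike_isothermal U f"
    and "normal_gauss_map U f \<tau>"
    and "\<forall>z\<in>U. mean_curv f \<tau> z = 0"
    and "{w\<in>U. gauss_curv f w = 0} = {}"
  shows "conf_equiv_disk U"
proof (cases "U = UNIV")
  case True
  then have "gauss_curv f z = 0" for z
    using entire_maximal_surface_flat assms(5-8) by simp
  then show ?thesis
    using assms(9) True by simp
next
  case False
  then obtain p q where "p holomorphic_on U"
    and "\<forall>z\<in>U. p z \<in> ball 0 1 \<and> q (p z) = z" "\<forall>z\<in>ball 0 1. q z \<in> U \<and> p (q z) = z"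
    using assms(3,4) simply_connected_eq_biholomorphic_to_disc[OF assms(1)] by blast
  moreover from this(2,3) have "bij_betw p U (ball 0 1)"
    by (intro bij_betw_byWitness[of U q]) auto
  ultimately show ?thesis
    unfolding conf_equiv_disk_def by blast
qed

end
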